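(* Let $F\colon \mathbb{R}^n \to \mathbb{R}$ be a differentiable function (a deep neural network) that is strictly positive homogeneous of degree $k \in \mathbb{R}$ with $k \geq 1$, i.e. $F(\alpha x) = \alpha^k F(x)$ for all $x \in \mathbb{R}^n$ and all $\alpha \in \mathbb{R}_{>0}$. Then for every $x\in\mathbb{R}^n$ and every $i\in\{1,\dots,n\}$, the Integrated Gradients attribution $\mathrm{IG}_i(F, x, \mathbf{0})$ with respect to the zero baseline $\mathbf{0}\in\mathbb{R}^n$ admits a closed-form expression requiring only one forward/backward pass, i.e. an explicit expression in terms of $x$ and the single gradient $\nabla F(x)$.
   Context: For a differentiable $F\colon\mathbb{R}^n\to\mathbb{R}$, input $x\in\mathbb{R}^n$ and the zero baseline, Integrated Gradients along the $i$-th dimension (using the straight-line path $\gamma(\alpha)=\alpha x$) is defined as $\mathrm{IG}_i(F,x,\mathbf{0}) = \int_0^1 \frac{\partial F(\gamma(\alpha))}{\partial \gamma_i(\alpha)}\,\frac{\partial \gamma_i(\alpha)}{\partial \alpha}\,d\alpha = \int_0^1 \frac{\partial F}{\partial x_i}(\alpha x)\, x_i\, d\alpha$. "Requiring only one forward/backward pass" means the quantity can be computed from a single evaluation of $F$ and its gradient $\nabla F$ at the point $x$ (no numerical integration over multiple points). *)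

theory Defs
  imports "HOL-Analysis.Analysis"
begin

definition partial_deriv :: "(real^'n \<Rightarrow> real) \<Rightarrow> 'n \<Rightarrow> real^'n \<Rightarrow> real" where
  "partial_deriv F i x = frechet_derivative F (at x) (axis i 1)"

definition IG_zero :: "(real^'n \<Rightarrow> real) \<Rightarrow> real^'n \<Rightarrow> 'n \<Rightarrow> real" where
  "IG_zero F x i = integral {0..1} (\<lambda>a. partial_deriv F i (a *\<^sub>R x) * x $ i)"

end

theory Submission
  imports Defs
begin

text \<open>Differentiating \<open>F (a x) = a\<^sup>k F x\<close> in \<open>x\<close> shows that the gradient of a positively
  homogeneous function of degree \<open>k\<close> is homogeneous of degree \<open>k - 1\<close>. Along the ray
  \<open>a x\<close>, \<open>0 < a \<le> 1\<close>, the Integrated Gradients integrand is therefore \<open>a\<^sup>k\<^sup>-\<^sup>1\<close> times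
  its value at \<open>a = 1\<close>, and \<open>\<integral>\<^sub>0\<^sup>1 a\<^sup>k\<^sup>-\<^sup>1 da = 1/k\<close>.\<close>

lemma frechet_derivative_positively_homogeneous:
  fixes F :: "'a::real_normed_vector \<Rightarrow> 'b::real_normed_vector"
  assumes diff_x: "F differentiable (at x)" and diff_ax: "F differentiable (at (a *\<^sub>R x))"
    and hom: "\<And>y. F (a *\<^sub>R y) = a powr k *\<^sub>R F y"
    and a: "a > 0"
  shows "frechet_derivative F (at (a *\<^sub>R x)) h = a powr (k - 1) *\<^sub>R frechet_derivative F (at x) h"
proof -
  define D0 where "D0 = frechet_derivative F (at x)"
  define D1 where "D1 = frechet_derivative F (at (a *\<^sub>R x))"
  have D0: "(F has_derivative D0) (at x)"
    unfolding D0_def using diff_x frechet_derivative_works by blast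
  have D1: "(F has_derivative D1) (at (a *\<^sub>R x))"
    unfolding D1_def using diff_ax frechet_derivative_works by blast
  have "((\<lambda>y. F (a *\<^sub>R y)) has_derivative (\<lambda>h. D1 (a *\<^sub>R h))) (at x)"
    using has_derivative_compose[OF has_derivative_scaleR_right[OF has_derivative_ident] D1]
    by (simp add: o_def)
  moreover have "((\<lambda>y. F (a *\<^sub>R y)) has_derivative (\<lambda>h. a powr k *\<^sub>R D0 h)) (at x)"
    unfolding hom by (rule has_derivative_scaleR_right[OF D0])
  ultimately have "D1 (a *\<^sub>R h) = a powr k *\<^sub>R D0 h"
    by (metis has_derivative_unique)
  moreover have "D1 (a *\<^sub>R h) = a *\<^sub>R D1 h"
    using linear_scale[OF has_derivative_linear[OF D1]] .
  moreover have "a powr k = a * a powr (k - 1)"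
    using a powr_add[of a 1 "k - 1"] by simp
  ultimately have "a *\<^sub>R D1 h = a *\<^sub>R (a powr (k - 1) *\<^sub>R D0 h)"
    by (simp only: scaleR_scaleR)
  with a show ?thesis
    unfolding D0_def D1_def by (metis scaleR_cancel_left less_irrefl)
qed

lemma partial_deriv_positively_homogeneous:
  fixes F :: "real^'n \<Rightarrow> real"
  assumes diff: "\<And>x. F differentiable (at x)"
    and hom: "\<And>x a. a > 0 \<Longrightarrow> F (a *\<^sub>R x) = a powr k * F x"
    and a: "a > 0"
  shows "partial_deriv F i (a *\<^sub>R x) = a powr (k - 1) * partial_deriv F i x"
  using frechet_derivative_positively_homogeneous[OF diff diff _ a] hom a
  unfolding partial_deriv_def by simp

lemma has_integral_powr_minus_one_unit_interval:
  fixes k :: real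
  assumes "k > 0"
  shows "((\<lambda>a. a powr (k - 1)) has_integral 1 / k) {0..1}"
  using has_integral_powr_from_0[of "k - 1" 1] assms by simp

lemma IG_zero_positively_homogeneous:
  fixes F :: "real^'n \<Rightarrow> real" and k :: real
  assumes diff: "\<And>x. F differentiable (at x)"
    and hom: "\<And>x a. a > 0 \<Longrightarrow> F (a *\<^sub>R x) = a powr k * F x"
    and k: "k > 0"
  shows "IG_zero F x i = x $ i * partial_deriv F i x / k"
proof -
  let ?c = "partial_deriv F i x * x $ i"
  have "((\<lambda>a. a powr (k - 1) * ?c) has_integral 1 / k * ?c) {0..1}"
    using has_integral_mult_left[OF has_integral_powr_minus_one_unit_interval[OF k]] .
  then have "((\<lambda>a. partial_deriv F i (a *\<^sub>R x) * x $ i) has_integral 1 / k * ?c) {0..1}"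
    \<comment> \<open>homogeneity only holds for \<open>a > 0\<close>, so the point \<open>a = 0\<close> is spiked out\<close>
    by (rule has_integral_spike_finite[where S = "{0}", rotated 2])
      (auto simp: partial_deriv_positively_homogeneous[OF diff hom])
  then show ?thesis
    unfolding IG_zero_def by (simp only: integral_unique) simp
qed

theorem proposition3p2:
  fixes F :: "real^'n \<Rightarrow> real" and k :: real
  assumes diff: "\<And>x. F differentiable (at x)"
    and hom: "\<And>x a. a > 0 \<Longrightarrow> F (a *\<^sub>R x) = a powr k * F x"
    and k: "k \<ge> 1"
  shows "\<forall>x i. IG_zero F x i = x $ i * partial_deriv F i x / k"
  using IG_zero_positively_homogeneous[OF diff hom] k by simp

end
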